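(* Let $d\ge2$, $n\ge1$, $N=nd$, $F\in[0,1)$ with $F\ne 2^{-N}$, and $c=F-\frac{1-F}{2^N-1}$. Let $\rho_0$ be the $N$-qubit depolarized GHZ state with fidelity $F$, $\rho_x=U(x)\rho_0U(x)^\dagger$, and for $\alpha\in\mathbb{R}$ let $M(\alpha)=O(\alpha)^{\otimes N}$ with $O(\alpha)=e^{i\alpha}|1\rangle\langle0|+e^{-i\alpha}|0\rangle\langle1|$. Define the error-propagation variance at $x=0$, $$V(\alpha)=\frac{\langle M(\alpha)^2\rangle-\langle M(\alpha)\rangle^2}{\big|v_1\cdot\nabla_x\langle M(\alpha)\rangle\big|^2}\Bigg|_{x=0},\qquad \langle A\rangle=\mathrm{Tr}(\rho_xA),\ v_1=\tfrac{1}{\sqrt d}(1,\dots,1)^T,$$ for those $\alpha$ where the denominator is nonzero. Then the denominator is nonzero exactly when $\sin(nd\alpha)\neq0$, in which case $$V(\alpha)=\frac{1-c^2\cos^2(nd\alpha)}{d\,n^2c^2\sin^2(nd\alpha)};$$ $V$ attains its minimum exactly at $\alpha=\frac{(2l+1)\pi}{2nd}$, $l\in\mathbb{Z}$, with minimum value $\frac{1}{d\,c^2\,n^2}$. Moreover, for every $F\in[0,1]$, $d\,c^2>1$ if and only if $$F>\frac{2^{nd}+\sqrt d-1}{2^{nd}\sqrt d}.$$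
   Context: Setting: $d$ nodes with $n$ qubits each, qubits labelled $(i,k)$; $U(x)=\exp[-i\sum_{i=0}^{d-1}x_iH_i]$ with $H_i=\frac12\sum_{k=0}^{n-1}\sigma_z^{(i,k)}$, $x\in\mathbb{R}^d$. The $N$-qubit depolarized GHZ state with fidelity $F$ is $F|\mathrm{GHZ}_N\rangle\langle\mathrm{GHZ}_N|+\frac{1-F}{2^N-1}(I-|\mathrm{GHZ}_N\rangle\langle\mathrm{GHZ}_N|)$, $|\mathrm{GHZ}_N\rangle=(|0\cdots0\rangle+|1\cdots1\rangle)/\sqrt2$. The parameter of interest is $\theta_1=v_1^Tx$; the directional derivative $v_1\cdot\nabla_x$ is the derivative with respect to $\theta_1$ at fixed values of the orthogonal complementary parameters. The value $1/(n^2)$ per sample is the variance of the optimal local (non-networked) strategy, so $dc^2>1$ means advantage over it. *)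

theory Defs
  imports "HOL-Analysis.Analysis"
begin

text \<open>Operators on N qubits are complex matrices indexed by computational basis
states, represented as boolean lists of length N (False = |0>, True = |1>).
Qubit (i,k) of the paper (node i, local qubit k) sits at list position i*n+k.\<close>

type_synonym cmat = "bool list \<Rightarrow> bool list \<Rightarrow> complex"

definition bits :: "nat \<Rightarrow> bool list set" where
  "bits N = {xs. length xs = N}"

definition mmul :: "nat \<Rightarrow> cmat \<Rightarrow> cmat \<Rightarrow> cmat" where
  "mmul N A B = (\<lambda>a b. \<Sum>c\<in>bits N. A a c * B c b)"

definition idm :: cmat where
  "idm = (\<lambda>a b. if a = b then 1 else 0)"

fun mpow :: "nat \<Rightarrow> cmat \<Rightarrow> nat \<Rightarrow> cmat" where
  "mpow N A 0 = idm"
| "mpow N A (Suc k) = mmul N A (mpow N A k)"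

definition mexp :: "nat \<Rightarrow> cmat \<Rightarrow> cmat" where
  "mexp N A = (\<lambda>a b. \<Sum>k. mpow N A k a b / of_nat (fact k))"

definition adj :: "cmat \<Rightarrow> cmat" where
  "adj A = (\<lambda>a b. cnj (A b a))"

definition mtrace :: "nat \<Rightarrow> cmat \<Rightarrow> complex" where
  "mtrace N A = (\<Sum>a\<in>bits N. A a a)"

definition sigma_z :: "bool \<Rightarrow> bool \<Rightarrow> complex" where
  "sigma_z a b = (if a = b then (if a then -1 else 1) else 0)"

definition Oop :: "real \<Rightarrow> bool \<Rightarrow> bool \<Rightarrow> complex" where
  "Oop \<alpha> a b = (if a \<and> \<not> b then exp (\<i> * of_real \<alpha>)
                else if \<not> a \<and> b then exp (- \<i> * of_real \<alpha>) else 0)"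

definition local_op :: "nat \<Rightarrow> nat \<Rightarrow> (bool \<Rightarrow> bool \<Rightarrow> complex) \<Rightarrow> cmat" where
  "local_op N q A = (\<lambda>a b. A (a ! q) (b ! q) *
       (\<Prod>k\<in>{0..<N} - {q}. if a ! k = b ! k then 1 else 0))"

definition tensor_pow :: "nat \<Rightarrow> (bool \<Rightarrow> bool \<Rightarrow> complex) \<Rightarrow> cmat" where
  "tensor_pow N A = (\<lambda>a b. \<Prod>k<N. A (a ! k) (b ! k))"

definition Ham :: "nat \<Rightarrow> nat \<Rightarrow> nat \<Rightarrow> cmat" where
  "Ham d n i = (\<lambda>a b. (1/2) * (\<Sum>k<n. local_op (n*d) (i*n+k) sigma_z a b))"

text \<open>U(x) = exp(-i sum_i x_i H_i), x in R^d given as nat => real (indices < d).\<close>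
definition Uop :: "nat \<Rightarrow> nat \<Rightarrow> (nat \<Rightarrow> real) \<Rightarrow> cmat" where
  "Uop d n x = mexp (n*d) (\<lambda>a b. - \<i> * (\<Sum>i<d. of_real (x i) * Ham d n i a b))"

definition ghz :: "nat \<Rightarrow> bool list \<Rightarrow> complex" where
  "ghz N a = (if a = replicate N False \<or> a = replicate N True
              then complex_of_real (1 / sqrt 2) else 0)"

definition ghz_proj :: "nat \<Rightarrow> cmat" where
  "ghz_proj N = (\<lambda>a b. ghz N a * cnj (ghz N b))"

definition rho0 :: "nat \<Rightarrow> real \<Rightarrow> cmat" where
  "rho0 N F = (\<lambda>a b. of_real F * ghz_proj N a b
      + of_real ((1 - F) / (2 ^ N - 1)) * (idm a b - ghz_proj N a b))"

definition rhox :: "nat \<Rightarrow> nat \<Rightarrow> real \<Rightarrow> (nat \<Rightarrow> real) \<Rightarrow> cmat" where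
  "rhox d n F x = mmul (n*d) (mmul (n*d) (Uop d n x) (rho0 (n*d) F)) (adj (Uop d n x))"

definition Mop :: "nat \<Rightarrow> real \<Rightarrow> cmat" where
  "Mop N \<alpha> = tensor_pow N (Oop \<alpha>)"

definition expect :: "nat \<Rightarrow> nat \<Rightarrow> real \<Rightarrow> (nat \<Rightarrow> real) \<Rightarrow> cmat \<Rightarrow> complex" where
  "expect d n F x A = mtrace (n*d) (mmul (n*d) (rhox d n F x) A)"

definition v1 :: "nat \<Rightarrow> nat \<Rightarrow> real" where
  "v1 d = (\<lambda>i. 1 / sqrt (real d))"

text \<open>v1 . grad_x <M(alpha)> at x = 0, as the directional derivative along v1.\<close>
definition denom_deriv :: "nat \<Rightarrow> nat \<Rightarrow> real \<Rightarrow> real \<Rightarrow> complex" where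
  "denom_deriv d n F \<alpha> =
     vector_derivative (\<lambda>t::real. expect d n F (\<lambda>i. t * v1 d i) (Mop (n*d) \<alpha>)) (at 0)"

definition Verr :: "nat \<Rightarrow> nat \<Rightarrow> real \<Rightarrow> real \<Rightarrow> complex" where
  "Verr d n F \<alpha> =
     (expect d n F (\<lambda>i. 0) (mmul (n*d) (Mop (n*d) \<alpha>) (Mop (n*d) \<alpha>))
      - (expect d n F (\<lambda>i. 0) (Mop (n*d) \<alpha>))\<^sup>2)
     / complex_of_real ((cmod (denom_deriv d n F \<alpha>))\<^sup>2)"

definition cfid :: "nat \<Rightarrow> real \<Rightarrow> real" where
  "cfid N F = F - (1 - F) / (2 ^ N - 1)"

end

theory Submission
  imports Defs
begin

text \<open>U(x) is diagonal in the computational basis, so conjugating the depolarised GHZ state by it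
multiplies its coherence c/2 between 0...0 and 1...1 by the phase exp(-i n (x_0 + ... + x_{d-1})).
M(alpha) flips every qubit, so this coherence and its conjugate are the only entries contributing to
<M(alpha)> = c cos(N alpha - n (x_0 + ... + x_{d-1})), while M(alpha)^2 = I gives <M(alpha)^2> = 1.
Along v1 the sum of the x_i is t sqrt d, so the denominator is (c n sqrt d sin(N alpha))^2, and
V(alpha) = 1/(d n^2 c^2) + (1 - c^2) cos^2(N alpha) / (d n^2 c^2 sin^2(N alpha)) with c^2 < 1.
Finally F >= 0 forces sqrt d c > -1, so d c^2 > 1 iff sqrt d c > 1, which is linear in F.\<close>

lemma finite_bits [simp]: "finite (bits N)"
  unfolding bits_def using finite_lists_length_eq[of "UNIV :: bool set" N] by simp

lemma card_bits: "card (bits N) = 2 ^ N"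
  unfolding bits_def using card_lists_length_eq[of "UNIV :: bool set" N] by simp

lemma mem_bits [simp]: "a \<in> bits N \<longleftrightarrow> length a = N"
  by (simp add: bits_def)

lemma Not_comp_Not [simp]: "Not \<circ> Not = id"
  by (simp add: fun_eq_iff)

lemma neq_map_Not: "xs \<noteq> [] \<Longrightarrow> xs \<noteq> map Not xs"
  by (cases xs) auto

lemma eq_map_Not_commute: "a = map Not b \<longleftrightarrow> b = map Not a"
  by auto

lemma sum_bits_replicate:
  assumes "N \<ge> 1"
    and "\<And>a. length a = N \<Longrightarrow> a \<noteq> replicate N False \<Longrightarrow> a \<noteq> replicate N True \<Longrightarrow> f a = 0"
  shows "(\<Sum>a\<in>bits N. f a) = f (replicate N False) + f (replicate N True)"
proof -
  have "replicate N False \<noteq> replicate N True"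
    using assms(1) by (cases N) auto
  moreover have "(\<Sum>a\<in>bits N. f a) = (\<Sum>a\<in>{replicate N False, replicate N True}. f a)"
    using assms(2) by (intro sum.mono_neutral_right) auto
  ultimately show ?thesis by simp
qed

subsection \<open>Diagonal operators\<close>

definition is_diag :: "nat \<Rightarrow> cmat \<Rightarrow> bool" where
  "is_diag N A \<longleftrightarrow> (\<forall>a b. length a = N \<longrightarrow> length b = N \<longrightarrow> a \<noteq> b \<longrightarrow> A a b = 0)"

lemma local_op_is_diag:
  assumes "\<And>u v. u \<noteq> v \<Longrightarrow> A u v = 0"
  shows "is_diag N (local_op N q A)"
  unfolding is_diag_def
proof (intro allI impI)
  fix a b :: "bool list"
  assume "length a = N" "length b = N" "a \<noteq> b"
  then obtain k where k: "k < N" "a ! k \<noteq> b ! k"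
    by (auto simp: list_eq_iff_nth_eq)
  show "local_op N q A a b = 0"
  proof (cases "k = q")
    case True
    with k assms show ?thesis by (simp add: local_op_def)
  next
    case False
    with k have "(\<Prod>j\<in>{0..<N} - {q}. if a ! j = b ! j then 1 else 0) = (0 :: complex)"
      by (intro prod_zero) auto
    then show ?thesis by (simp add: local_op_def)
  qed
qed

lemma mpow_is_diag:
  assumes "is_diag N A" "length a = N" "length b = N"
  shows "mpow N A k a b = (if a = b then A a a ^ k else 0)"
  using assms(2,3)
proof (induction k arbitrary: a b)
  case 0
  then show ?case by (simp add: idm_def)
next
  case (Suc k)
  have "mpow N A (Suc k) a b = (\<Sum>c\<in>bits N. A a c * (if c = b then A c c ^ k else 0))"
    using Suc by (simp add: mmul_def)
  also have "\<dots> = (\<Sum>c\<in>bits N. if c = b then A a b * A b b ^ k else 0)"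
    by (intro sum.cong) auto
  also have "\<dots> = A a b * A b b ^ k"
    using Suc.prems by simp
  finally show ?case
    using assms(1) Suc.prems by (auto simp: is_diag_def)
qed

lemma exp_sums_complex: "(\<lambda>k. z ^ k / of_nat (fact k)) sums exp (z :: complex)"
  using exp_converges[of z] by (simp add: scaleR_conv_of_real field_simps)

lemma mexp_is_diag:
  assumes "is_diag N A" "length a = N" "length b = N"
  shows "mexp N A a b = (if a = b then exp (A a a) else 0)"
  using mpow_is_diag[OF assms] exp_sums_complex[of "A a a", THEN sums_unique]
  by (auto simp: mexp_def)

lemma mmul_adj_diag:
  assumes U: "\<And>a b. length a = N \<Longrightarrow> length b = N \<Longrightarrow> U a b = (if a = b then u a else 0)"
    and "length a = N" "length b = N"
  shows "mmul N (mmul N U R) (adj U) a b = u a * R a b * cnj (u b)"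
proof -
  have UR: "mmul N U R a c = u a * R a c" for c
  proof -
    have "mmul N U R a c = (\<Sum>e\<in>bits N. if e = a then u a * R a c else 0)"
      unfolding mmul_def using U assms(2) by (intro sum.cong) auto
    then show ?thesis using assms(2) by simp
  qed
  have "mmul N (mmul N U R) (adj U) a b = (\<Sum>c\<in>bits N. if c = b then u a * R a b * cnj (u b) else 0)"
    unfolding mmul_def[of N "mmul N U R"] adj_def
    using U assms(3) UR by (intro sum.cong) auto
  then show ?thesis using assms(3) by simp
qed

lemma mtrace_mmul_idm:
  assumes "\<And>a b. length a = N \<Longrightarrow> length b = N \<Longrightarrow> B a b = idm a b"
  shows "mtrace N (mmul N R B) = mtrace N R"
  unfolding mtrace_def
proof (intro sum.cong refl)
  fix a :: "bool list"
  assume a: "a \<in> bits N"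
  then have "mmul N R B a a = (\<Sum>c\<in>bits N. if c = a then R a a else 0)"
    unfolding mmul_def using assms by (intro sum.cong) (auto simp: idm_def)
  then show "mmul N R B a a = R a a" using a by simp
qed

subsection \<open>Expectation values\<close>

lemma Mop_apply:
  assumes "length a = N" "length b = N"
  shows "Mop N \<alpha> a b = (if b = map Not a then (\<Prod>k<N. Oop \<alpha> (a ! k) (\<not> a ! k)) else 0)"
proof (cases "b = map Not a")
  case True
  then show ?thesis using assms by (simp add: Mop_def tensor_pow_def)
next
  case False
  then obtain k where "k < N" "b ! k \<noteq> (\<not> a ! k)"
    using assms by (auto simp: list_eq_iff_nth_eq)
  then have "(\<Prod>k<N. Oop \<alpha> (a ! k) (b ! k)) = 0"
    by (intro prod_zero) (auto simp: Oop_def)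
  then show ?thesis using False by (simp add: Mop_def tensor_pow_def)
qed

lemma Mop_squared:
  assumes "length a = N" "length b = N"
  shows "mmul N (Mop N \<alpha>) (Mop N \<alpha>) a b = idm a b"
proof -
  have "mmul N (Mop N \<alpha>) (Mop N \<alpha>) a b = Mop N \<alpha> a (map Not a) * Mop N \<alpha> (map Not a) b"
  proof -
    have "mmul N (Mop N \<alpha>) (Mop N \<alpha>) a b = (\<Sum>c\<in>bits N.
        if c = map Not a then Mop N \<alpha> a (map Not a) * Mop N \<alpha> (map Not a) b else 0)"
      unfolding mmul_def using assms by (intro sum.cong) (auto simp: Mop_apply)
    then show ?thesis using assms by simp
  qed
  also have "\<dots> = idm a b"
  proof (cases "a = b")
    case True
    have "(\<Prod>k<N. Oop \<alpha> (a ! k) (\<not> a ! k)) * (\<Prod>k<N. Oop \<alpha> (\<not> a ! k) (a ! k))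
        = (\<Prod>k<N. Oop \<alpha> (a ! k) (\<not> a ! k) * Oop \<alpha> (\<not> a ! k) (a ! k))"
      by (simp add: prod.distrib)
    also have "\<dots> = 1"
      by (intro prod.neutral) (auto simp: Oop_def exp_minus field_simps)
    finally show ?thesis using True assms by (simp add: Mop_apply idm_def comp_def)
  next
    case False
    then have "b \<noteq> map Not (map Not a)" by simp
    then show ?thesis using False assms by (simp add: Mop_apply idm_def)
  qed
  finally show ?thesis .
qed

lemma mtrace_mmul_Mop:
  "mtrace N (mmul N R (Mop N \<alpha>)) = (\<Sum>a\<in>bits N. R a (map Not a) * Mop N \<alpha> (map Not a) a)"
  unfolding mtrace_def
proof (intro sum.cong refl)
  fix a :: "bool list"
  assume a: "a \<in> bits N"
  then have "mmul N R (Mop N \<alpha>) a a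
      = (\<Sum>c\<in>bits N. if c = map Not a then R a (map Not a) * Mop N \<alpha> (map Not a) a else 0)"
    unfolding mmul_def using Mop_apply eq_map_Not_commute by (intro sum.cong) auto
  then show "mmul N R (Mop N \<alpha>) a a = R a (map Not a) * Mop N \<alpha> (map Not a) a"
    using a by simp
qed

lemma Mop_replicate:
  "Mop N \<alpha> (replicate N True) (replicate N False) = exp (\<i> * \<alpha>) ^ N"
  "Mop N \<alpha> (replicate N False) (replicate N True) = exp (- \<i> * \<alpha>) ^ N"
  by (simp_all add: Mop_def tensor_pow_def Oop_def)

lemma ghz_proj_replicate: "ghz_proj N (replicate N b) (replicate N b') = 1 / 2"
proof -
  have "complex_of_real (1 / sqrt 2) * complex_of_real (1 / sqrt 2) = of_real (1 / sqrt 2 * (1 / sqrt 2))"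
    by (rule of_real_mult[symmetric])
  then show ?thesis by (simp add: ghz_proj_def ghz_def)
qed

lemma rho0_coherence:
  assumes "N \<ge> 1"
  shows "rho0 N F (replicate N b) (replicate N (\<not> b)) = of_real (cfid N F / 2)"
proof -
  have "replicate N b \<noteq> replicate N (\<not> b)"
    using assms by (cases N) auto
  moreover have "of_real F * (1 / 2) + of_real Q * (0 - 1 / 2) = complex_of_real ((F - Q) / 2)" for Q
    by (simp add: field_simps)
  ultimately show ?thesis
    unfolding rho0_def ghz_proj_replicate idm_def cfid_def by (simp only: if_False)
qed

lemma rho0_flip_outside_ghz:
  assumes "length a \<ge> 1" "a \<noteq> replicate (length a) False" "a \<noteq> replicate (length a) True"
  shows "rho0 (length a) F a (map Not a) = 0"
proof -
  have "a \<noteq> map Not a" using assms(1) by (intro neq_map_Not) auto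
  then show ?thesis using assms(2,3) by (simp add: rho0_def ghz_proj_def ghz_def idm_def)
qed

lemma mtrace_rho0:
  assumes "N \<ge> 1"
  shows "mtrace N (rho0 N F) = 1"
proof -
  define Q where "Q = (1 - F) / (2 ^ N - 1)"
  have ghz_trace: "(\<Sum>a\<in>bits N. ghz_proj N a a) = 1"
    using assms by (subst sum_bits_replicate) (auto simp: ghz_proj_replicate, simp add: ghz_proj_def ghz_def)
  have "mtrace N (rho0 N F) = (\<Sum>a\<in>bits N. of_real F * ghz_proj N a a + of_real Q * (1 - ghz_proj N a a))"
    unfolding mtrace_def by (simp add: rho0_def idm_def Q_def)
  also have "\<dots> = of_real (F + Q * (2 ^ N - 1))"
    by (simp add: sum.distrib sum_subtractf flip: sum_distrib_left add: ghz_trace card_bits)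
  also have "\<dots> = 1"
  proof -
    have "(1 :: real) < 2 ^ N" using assms by (intro one_less_power) auto
    then show ?thesis by (simp add: Q_def)
  qed
  finally show ?thesis .
qed

definition Ugen :: "nat \<Rightarrow> nat \<Rightarrow> (nat \<Rightarrow> real) \<Rightarrow> cmat" where
  "Ugen d n x = (\<lambda>a b. - \<i> * (\<Sum>i<d. of_real (x i) * Ham d n i a b))"

lemma Ugen_is_diag: "is_diag (n * d) (Ugen d n x)"
  using local_op_is_diag[of sigma_z] by (auto simp: is_diag_def Ugen_def Ham_def sigma_z_def)

lemma Uop_apply:
  assumes "length a = n * d" "length b = n * d"
  shows "Uop d n x a b = (if a = b then exp (Ugen d n x a a) else 0)"
  unfolding Uop_def Ugen_def[symmetric] using Ugen_is_diag assms by (rule mexp_is_diag)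

lemma rhox_apply:
  assumes "length a = n * d" "length b = n * d"
  shows "rhox d n F x a b = exp (Ugen d n x a a) * rho0 (n * d) F a b * cnj (exp (Ugen d n x b b))"
  unfolding rhox_def using Uop_apply assms by (rule mmul_adj_diag)

lemma Ugen_replicate:
  "Ugen d n x (replicate (n * d) b) (replicate (n * d) b)
     = (if b then \<i> else - \<i>) * of_real ((\<Sum>i<d. x i) * n / 2)"
proof -
  have index_bound: "i * n + k < n * d" if "i < d" "k < n" for i k
  proof -
    have "i * n + k < Suc i * n" using that by simp
    also have "\<dots> \<le> d * n" using that by (intro mult_right_mono) auto
    finally show ?thesis by (simp add: mult.commute)
  qed
  have "Ham d n i (replicate (n * d) b) (replicate (n * d) b) = (if b then - of_nat n / 2 else of_nat n / 2)"
    if "i < d" for i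
    using index_bound that by (simp add: Ham_def local_op_def sigma_z_def)
  then have "Ugen d n x (replicate (n * d) b) (replicate (n * d) b)
      = - \<i> * (\<Sum>i<d. of_real (x i) * (if b then - of_nat n / 2 else of_nat n / 2))"
    by (simp add: Ugen_def)
  also have "\<dots> = (if b then \<i> else - \<i>) * of_real ((\<Sum>i<d. x i) * n / 2)"
  proof -
    have sum_factor: "(\<Sum>i<d. of_real (x i) * z) = of_real (\<Sum>i<d. x i) * z" for z :: complex
      by (simp add: sum_distrib_right)
    show ?thesis unfolding sum_factor by (cases b) (simp_all add: field_simps)
  qed
  finally show ?thesis .
qed

lemma phase_sum_eq_cos:
  fixes t \<alpha> w :: real
  shows "exp (- \<i> * t) * w * cnj (exp (\<i> * t)) * exp (\<i> * \<alpha>) ^ N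
       + exp (\<i> * t) * w * cnj (exp (- \<i> * t)) * exp (- \<i> * \<alpha>) ^ N
       = 2 * w * cos (real N * \<alpha> - 2 * t)"
proof -
  have cis: "exp (\<i> * of_real y) = cis y" "exp (- \<i> * of_real y) = cis (- y)" for y
    by (simp_all add: cis_conv_exp)
  have 1: "cis (- t) * cnj (cis t) * cis \<alpha> ^ N = cis (real N * \<alpha> - 2 * t)"
    and 2: "cis t * cnj (cis (- t)) * cis (- \<alpha>) ^ N = cis (- (real N * \<alpha> - 2 * t))"
    unfolding cis_cnj Complex.DeMoivre cis_mult by (simp_all add: algebra_simps)
  have 3: "cis y + cis (- y) = 2 * cos y" for y
    by (simp add: complex_eq_iff)
  have "exp (- \<i> * t) * w * cnj (exp (\<i> * t)) * exp (\<i> * \<alpha>) ^ N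
       + exp (\<i> * t) * w * cnj (exp (- \<i> * t)) * exp (- \<i> * \<alpha>) ^ N
     = w * (cis (- t) * cnj (cis t) * cis \<alpha> ^ N + cis t * cnj (cis (- t)) * cis (- \<alpha>) ^ N)"
    unfolding cis by (simp add: algebra_simps)
  then show ?thesis unfolding 1 2 3 by simp
qed

lemma expect_Mop:
  assumes "n \<ge> 1" "d \<ge> 1"
  shows "expect d n F x (Mop (n * d) \<alpha>)
    = of_real (cfid (n * d) F * cos (real (n * d) * \<alpha> - real n * (\<Sum>i<d. x i)))"
proof -
  define N where "N = n * d"
  have N: "N \<ge> 1" using assms by (simp add: N_def)
  define u where "u a = exp (Ugen d n x a a)" for a
  define f where "f a = u a * rho0 N F a (map Not a) * cnj (u (map Not a)) * Mop N \<alpha> (map Not a) a" for a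
  define t where "t = (\<Sum>i<d. x i) * real n / 2"
  have "expect d n F x (Mop N \<alpha>) = (\<Sum>a\<in>bits N. f a)"
    unfolding expect_def mtrace_mmul_Mop N_def[symmetric]
    by (intro sum.cong refl) (simp add: f_def u_def rhox_apply N_def)
  also have "\<dots> = f (replicate N False) + f (replicate N True)"
    using N rho0_flip_outside_ghz by (intro sum_bits_replicate) (auto simp: f_def)
  also have "\<dots> = of_real (cfid N F * cos (real N * \<alpha> - 2 * t))"
  proof -
    have "u (replicate N False) = exp (- \<i> * t)" "u (replicate N True) = exp (\<i> * t)"
      by (simp_all add: u_def N_def Ugen_replicate t_def)
    moreover have "rho0 N F (replicate N False) (replicate N True) = of_real (cfid N F / 2)"
      and "rho0 N F (replicate N True) (replicate N False) = of_real (cfid N F / 2)"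
      using rho0_coherence[OF N, where b = False] rho0_coherence[OF N, where b = True] by simp_all
    ultimately have "f (replicate N False) + f (replicate N True)
        = of_real (2 * (cfid N F / 2) * cos (real N * \<alpha> - 2 * t))"
      unfolding f_def by (simp only: phase_sum_eq_cos Mop_replicate map_replicate not_False_eq_True not_True_eq_False)
    then show ?thesis by simp
  qed
  finally show ?thesis by (simp add: N_def t_def mult.commute)
qed

lemma expect_Mop_squared:
  assumes "n \<ge> 1" "d \<ge> 1"
  shows "expect d n F (\<lambda>i. 0) (mmul (n * d) (Mop (n * d) \<alpha>) (Mop (n * d) \<alpha>)) = 1"
proof -
  have "expect d n F (\<lambda>i. 0) (mmul (n * d) (Mop (n * d) \<alpha>) (Mop (n * d) \<alpha>))
      = mtrace (n * d) (rhox d n F (\<lambda>i. 0))"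
    unfolding expect_def using Mop_squared by (rule mtrace_mmul_idm)
  also have "\<dots> = mtrace (n * d) (rho0 (n * d) F)"
    unfolding mtrace_def by (intro sum.cong refl) (simp add: rhox_apply Ugen_def)
  also have "\<dots> = 1"
    using assms by (intro mtrace_rho0) simp
  finally show ?thesis .
qed

subsection \<open>Error propagation\<close>

lemma denom_deriv_eq:
  assumes "n \<ge> 1" "d \<ge> 1"
  shows "denom_deriv d n F \<alpha>
    = of_real (cfid (n * d) F * (real n * sqrt (real d)) * sin (real (n * d) * \<alpha>))"
proof -
  define c where "c = cfid (n * d) F"
  have sum_v1: "(\<Sum>i<d. t * v1 d i) = t * sqrt (real d)" for t
  proof -
    have "(\<Sum>i<d. t * v1 d i) = t * (real d / sqrt (real d))" by (simp add: v1_def)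
    then show ?thesis by (simp add: real_div_sqrt)
  qed
  have "((\<lambda>t. c * cos (real (n * d) * \<alpha> - real n * (t * sqrt (real d)))) has_real_derivative
      c * (real n * sqrt (real d)) * sin (real (n * d) * \<alpha>)) (at 0)"
    by (auto intro!: derivative_eq_intros)
  then have "((\<lambda>t. expect d n F (\<lambda>i. t * v1 d i) (Mop (n * d) \<alpha>)) has_vector_derivative
      of_real (c * (real n * sqrt (real d)) * sin (real (n * d) * \<alpha>))) (at 0)"
    unfolding expect_Mop[OF assms] sum_v1 c_def by (rule has_vector_derivative_of_real)
  then show ?thesis
    unfolding denom_deriv_def c_def by (rule vector_derivative_at)
qed

lemma Verr_eq:
  assumes "n \<ge> 1" "d \<ge> 1"
  shows "Verr d n F \<alpha> = of_real ((1 - (cfid (n * d) F)\<^sup>2 * (cos (real (n * d) * \<alpha>))\<^sup>2)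
    / (real d * (real n)\<^sup>2 * (cfid (n * d) F)\<^sup>2 * (sin (real (n * d) * \<alpha>))\<^sup>2))"
proof -
  define c where "c = cfid (n * d) F"
  define C where "C = cos (real (n * d) * \<alpha>)"
  define S where "S = sin (real (n * d) * \<alpha>)"
  have "Verr d n F \<alpha> = (1 - (of_real (c * C))\<^sup>2)
      / of_real ((cmod (of_real (c * (real n * sqrt (real d)) * S)))\<^sup>2)"
    unfolding Verr_def expect_Mop_squared[OF assms] expect_Mop[OF assms] denom_deriv_eq[OF assms]
    by (simp add: c_def C_def S_def del: of_real_mult)
  also have "\<dots> = of_real ((1 - (c * C)\<^sup>2) / (c * (real n * sqrt (real d)) * S)\<^sup>2)"
    by (simp only: norm_of_real power2_abs of_real_power of_real_diff of_real_1 of_real_divide)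
  also have "\<dots> = of_real ((1 - c\<^sup>2 * C\<^sup>2) / (real d * (real n)\<^sup>2 * c\<^sup>2 * S\<^sup>2))"
    by (simp add: power_mult_distrib)
  finally show ?thesis by (simp add: c_def C_def S_def)
qed

subsection \<open>The effective contrast c\<close>

lemma cfid_eq:
  assumes "N \<ge> 1"
  shows "cfid N F = (F * 2 ^ N - 1) / (2 ^ N - 1)"
proof -
  have "(1 :: real) < 2 ^ N" using assms by (intro one_less_power) auto
  then show ?thesis by (simp add: cfid_def field_simps)
qed

lemma cfid_nonzero:
  assumes "N \<ge> 1" "F \<noteq> 1 / 2 ^ N"
  shows "cfid N F \<noteq> 0"
proof -
  have "(1 :: real) < 2 ^ N" using assms(1) by (intro one_less_power) auto
  moreover have "F * 2 ^ N - 1 \<noteq> 0" using assms(2) by (auto simp: field_simps)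
  ultimately show ?thesis by (simp add: cfid_eq[OF assms(1)])
qed

lemma cfid_squared_less_one:
  assumes "N \<ge> 2" "0 \<le> F" "F < 1"
  shows "(cfid N F)\<^sup>2 < 1"
proof -
  define P :: real where "P = 2 ^ N"
  have "(2 :: real) ^ 2 \<le> 2 ^ N" using assms(1) by (intro power_increasing) auto
  then have P: "P \<ge> 4" by (simp add: P_def)
  have FP: "0 \<le> F * P" "F * P < P" using assms P by auto
  have "(F * P - 1) / (P - 1) < 1" using FP P by (simp add: divide_less_eq)
  moreover have "(F * P - 1) / (P - 1) > -1" using FP P by (simp add: less_divide_eq)
  moreover have "cfid N F = (F * P - 1) / (P - 1)"
    using cfid_eq[of N F] assms(1) by (simp add: P_def)
  ultimately show ?thesis
    unfolding abs_square_less_1 by linarith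
qed

lemma scaled_contrast_threshold:
  fixes P s F :: real
  assumes "0 < s" "s < P - 1" "0 \<le> F"
  shows "(s * ((F * P - 1) / (P - 1)))\<^sup>2 > 1 \<longleftrightarrow> F > (P + s - 1) / (P * s)"
proof -
  define c where "c = (F * P - 1) / (P - 1)"
  have P: "P - 1 > 0" using assms by simp
  have "F * P \<ge> 0" using assms by simp
  then have "- 1 / (P - 1) \<le> c"
    using P divide_right_mono[of "- 1" "F * P - 1" "P - 1"] by (simp add: c_def)
  then have "s * (- 1 / (P - 1)) \<le> s * c"
    using assms(1) by (intro mult_left_mono) auto
  moreover have "s * (- 1 / (P - 1)) > -1"
    using assms P by (simp add: field_simps)
  ultimately have "s * c > -1" by linarith
  then have "(s * c)\<^sup>2 > 1 \<longleftrightarrow> s * c > 1"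
    using abs_square_le_1[of "s * c"] by linarith
  also have "\<dots> \<longleftrightarrow> F * (P * s) > P + s - 1"
    using P by (simp add: c_def field_simps)
  also have "\<dots> \<longleftrightarrow> F > (P + s - 1) / (P * s)"
    using assms P by (simp add: divide_less_eq)
  finally show ?thesis by (simp add: c_def)
qed

lemma cfid_threshold:
  assumes "d \<ge> 2" "N \<ge> d" "0 \<le> F"
  shows "real d * (cfid N F)\<^sup>2 > 1
    \<longleftrightarrow> F > (2 ^ N + sqrt (real d) - 1) / (2 ^ N * sqrt (real d))"
proof -
  have "sqrt (real d) < real d"
    using assms(1) by (intro real_less_lsqrt) (auto simp: power2_eq_square)
  moreover have "d < 2 ^ d" by (rule less_exp)
  moreover have "(2 :: nat) ^ d \<le> 2 ^ N" using assms(2) by (intro power_increasing) auto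
  ultimately have "d + 1 \<le> (2 :: nat) ^ N" by linarith
  then have "real d + 1 \<le> 2 ^ N"
    using of_nat_le_iff[of "d + 1" "2 ^ N", where 'a = real] by simp
  with \<open>sqrt (real d) < real d\<close> have "sqrt (real d) < 2 ^ N - 1" by simp
  moreover have "real d * (cfid N F)\<^sup>2 = (sqrt (real d) * cfid N F)\<^sup>2"
    by (simp add: power_mult_distrib)
  ultimately show ?thesis
    using scaled_contrast_threshold[of "sqrt (real d)" "2 ^ N" F] assms cfid_eq[of N F]
    by (simp add: mult.commute)
qed

subsection \<open>Minimising the error\<close>

lemma ratio_split_sin_squared:
  fixes K c \<theta> :: real
  assumes "sin \<theta> \<noteq> 0"
  shows "(1 - c\<^sup>2 * (cos \<theta>)\<^sup>2) / (K * (sin \<theta>)\<^sup>2) = 1 / K + (1 - c\<^sup>2) * (cos \<theta>)\<^sup>2 / (K * (sin \<theta>)\<^sup>2)"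
proof -
  have "1 - c\<^sup>2 * (cos \<theta>)\<^sup>2 = (sin \<theta>)\<^sup>2 + (1 - c\<^sup>2) * (cos \<theta>)\<^sup>2"
    using sin_cos_squared_add[of \<theta>] by (simp add: algebra_simps)
  then show ?thesis using assms by (simp add: add_divide_distrib)
qed

lemma cos_eq_0_iff_odd:
  "cos x = 0 \<longleftrightarrow> (\<exists>l::int. x = of_int (2 * l + 1) * (pi / 2))"
proof
  assume "cos x = 0"
  then obtain i :: int where i: "odd i" "x = of_int i * (pi / 2)"
    by (auto simp: cos_zero_iff_int)
  from \<open>odd i\<close> obtain l where "i = 2 * l + 1" by (rule oddE)
  with i show "\<exists>l::int. x = of_int (2 * l + 1) * (pi / 2)" by blast
next
  assume "\<exists>l::int. x = of_int (2 * l + 1) * (pi / 2)"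
  then obtain l :: int where "x = of_int (2 * l + 1) * (pi / 2)" by blast
  moreover have "odd (2 * l + 1)" by simp
  ultimately show "cos x = 0" unfolding cos_zero_iff_int by blast
qed

lemma cos_mult_eq_0_iff:
  fixes w :: real
  assumes "w \<noteq> 0"
  shows "cos (w * \<alpha>) = 0 \<longleftrightarrow> (\<exists>l::int. \<alpha> = (2 * real_of_int l + 1) * pi / (2 * w))"
  unfolding cos_eq_0_iff_odd using assms by (simp add: field_simps)

lemma denom_deriv_nonzero_iff:
  assumes "n \<ge> 1" "d \<ge> 1" "F \<noteq> 1 / 2 ^ (n * d)"
  shows "denom_deriv d n F \<alpha> \<noteq> 0 \<longleftrightarrow> sin (real (n * d) * \<alpha>) \<noteq> 0"
  using cfid_nonzero[of "n * d" F] assms by (simp add: denom_deriv_eq)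

lemma Verr_lower_bound:
  assumes "n * d \<ge> 2" "0 \<le> F" "F < 1" "F \<noteq> 1 / 2 ^ (n * d)" "denom_deriv d n F \<alpha> \<noteq> 0"
  shows "Re (Verr d n F \<alpha>) \<ge> 1 / (real d * (real n)\<^sup>2 * (cfid (n * d) F)\<^sup>2)"
    and "Re (Verr d n F \<alpha>) = 1 / (real d * (real n)\<^sup>2 * (cfid (n * d) F)\<^sup>2)
      \<longleftrightarrow> cos (real (n * d) * \<alpha>) = 0"
proof -
  have nd: "n \<ge> 1" "d \<ge> 1" using assms(1) by (auto simp: Suc_le_eq intro!: gr0I)
  define c where "c = cfid (n * d) F"
  define K where "K = real d * (real n)\<^sup>2 * c\<^sup>2"
  define \<theta> where "\<theta> = real (n * d) * \<alpha>"
  have "c \<noteq> 0" using cfid_nonzero[of "n * d" F] assms nd by (simp add: c_def)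
  then have K: "K > 0" using nd by (simp add: K_def)
  have c: "c\<^sup>2 < 1" using cfid_squared_less_one assms by (simp add: c_def)
  have sin: "sin \<theta> \<noteq> 0" using denom_deriv_nonzero_iff nd assms by (simp add: \<theta>_def)
  have V: "Re (Verr d n F \<alpha>) = 1 / K + (1 - c\<^sup>2) * (cos \<theta>)\<^sup>2 / (K * (sin \<theta>)\<^sup>2)"
    unfolding Verr_eq[OF nd] Re_complex_of_real c_def[symmetric] \<theta>_def[symmetric] K_def[symmetric]
    by (rule ratio_split_sin_squared[OF sin])
  have "(1 - c\<^sup>2) * (cos \<theta>)\<^sup>2 / (K * (sin \<theta>)\<^sup>2) \<ge> 0"
    using c K by simp
  then have "Re (Verr d n F \<alpha>) \<ge> 1 / K" using V by simp
  then show "Re (Verr d n F \<alpha>) \<ge> 1 / (real d * (real n)\<^sup>2 * (cfid (n * d) F)\<^sup>2)"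
    by (simp add: K_def c_def)
  have "Re (Verr d n F \<alpha>) = 1 / K \<longleftrightarrow> cos \<theta> = 0"
    using V c K sin by simp
  then show "Re (Verr d n F \<alpha>) = 1 / (real d * (real n)\<^sup>2 * (cfid (n * d) F)\<^sup>2)
      \<longleftrightarrow> cos (real (n * d) * \<alpha>) = 0"
    by (simp add: K_def c_def \<theta>_def)
qed

lemma argmin_eq_if_lower_bound_attained:
  fixes f :: "'a \<Rightarrow> real"
  assumes "\<And>x. D x \<Longrightarrow> m \<le> f x" "\<And>x. D x \<Longrightarrow> f x = m \<longleftrightarrow> P x"
    and "\<And>x. P x \<Longrightarrow> D x" "P x\<^sub>0"
  shows "{x. D x \<and> (\<forall>y. D y \<longrightarrow> f x \<le> f y)} = {x. P x}"
proof (intro Collect_cong iffI)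
  have min: "D x\<^sub>0" "f x\<^sub>0 = m" using assms(2-4) by blast+
  fix x
  assume "D x \<and> (\<forall>y. D y \<longrightarrow> f x \<le> f y)"
  with min assms(1) have "D x" "f x = m" by (auto intro: order_antisym)
  with assms(2) show "P x" by blast
next
  fix x
  assume "P x"
  with assms(1-3) show "D x \<and> (\<forall>y. D y \<longrightarrow> f x \<le> f y)" by force
qed

lemma Verr_minimizers:
  assumes "n * d \<ge> 2" "0 \<le> F" "F < 1" "F \<noteq> 1 / 2 ^ (n * d)"
  shows "{\<alpha>. denom_deriv d n F \<alpha> \<noteq> 0 \<and>
      (\<forall>\<beta>. denom_deriv d n F \<beta> \<noteq> 0 \<longrightarrow> Re (Verr d n F \<alpha>) \<le> Re (Verr d n F \<beta>))}
    = {\<alpha>. cos (real (n * d) * \<alpha>) = 0}"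
proof -
  have nd: "n \<ge> 1" "d \<ge> 1" using assms(1) by (auto simp: Suc_le_eq intro!: gr0I)
  have admissible: "denom_deriv d n F \<alpha> \<noteq> 0" if "cos (real (n * d) * \<alpha>) = 0" for \<alpha>
    using that sin_cos_squared_add[of "real (n * d) * \<alpha>"] denom_deriv_nonzero_iff[OF nd assms(4)]
    by auto
  have "cos (real (n * d) * (pi / (2 * real (n * d)))) = 0" using nd by simp
  with Verr_lower_bound[OF assms] admissible show ?thesis
    by (rule argmin_eq_if_lower_bound_attained[where D = "\<lambda>\<alpha>. denom_deriv d n F \<alpha> \<noteq> 0"
        and f = "\<lambda>\<alpha>. Re (Verr d n F \<alpha>)" and P = "\<lambda>\<alpha>. cos (real (n * d) * \<alpha>) = 0"])
qed

lemma Verr_at_cos_eq_0: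
  assumes "n \<ge> 1" "d \<ge> 1" "cos (real (n * d) * \<alpha>) = 0"
  shows "Verr d n F \<alpha> = of_real (1 / (real d * (cfid (n * d) F)\<^sup>2 * (real n)\<^sup>2))"
proof -
  have "(sin (real (n * d) * \<alpha>))\<^sup>2 = 1"
    using sin_squared_eq[of "real (n * d) * \<alpha>"] assms(3) by simp
  then show ?thesis
    unfolding Verr_eq[OF assms(1,2)] using assms(3) by (intro arg_cong[where f = of_real]) simp
qed

theorem mainTheorem6:
  fixes d n :: nat and F :: real
  assumes "d \<ge> 2" and "n \<ge> 1" and "0 \<le> F" and "F < 1" and "F \<noteq> 1 / 2 ^ (n*d)"
  shows "(\<forall>\<alpha>. denom_deriv d n F \<alpha> \<noteq> 0 \<longleftrightarrow> sin (real (n*d) * \<alpha>) \<noteq> 0)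
    \<and> (\<forall>\<alpha>. sin (real (n*d) * \<alpha>) \<noteq> 0 \<longrightarrow>
          Verr d n F \<alpha> = complex_of_real
            ((1 - (cfid (n*d) F)\<^sup>2 * (cos (real (n*d) * \<alpha>))\<^sup>2)
             / (real d * (real n)\<^sup>2 * (cfid (n*d) F)\<^sup>2 * (sin (real (n*d) * \<alpha>))\<^sup>2)))
    \<and> {\<alpha>. denom_deriv d n F \<alpha> \<noteq> 0 \<and>
          (\<forall>\<beta>. denom_deriv d n F \<beta> \<noteq> 0 \<longrightarrow> Re (Verr d n F \<alpha>) \<le> Re (Verr d n F \<beta>))}
        = {\<alpha>. \<exists>l::int. \<alpha> = (2 * real_of_int l + 1) * pi / (2 * real (n*d))}
    \<and> (\<forall>l::int. Verr d n F ((2 * real_of_int l + 1) * pi / (2 * real (n*d)))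
          = complex_of_real (1 / (real d * (cfid (n*d) F)\<^sup>2 * (real n)\<^sup>2)))
    \<and> (\<forall>F'::real. 0 \<le> F' \<and> F' \<le> 1 \<longrightarrow>
          (real d * (cfid (n*d) F')\<^sup>2 > 1 \<longleftrightarrow>
           F' > (2 ^ (n*d) + sqrt (real d) - 1) / (2 ^ (n*d) * sqrt (real d))))"
proof -
  have d: "d \<ge> 1" and nd: "n * d \<ge> d" using assms(1,2) by simp_all
  have "real (n * d) \<noteq> 0" using assms(1,2) by simp
  then have minimizers: "{\<alpha>. cos (real (n * d) * \<alpha>) = 0}
      = {\<alpha>. \<exists>l::int. \<alpha> = (2 * real_of_int l + 1) * pi / (2 * real (n * d))}"
    by (simp add: cos_mult_eq_0_iff)
  have "cos (real (n * d) * ((2 * real_of_int l + 1) * pi / (2 * real (n * d)))) = 0" for l :: int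
    using minimizers by blast
  then have value_at_minimizers: "Verr d n F ((2 * real_of_int l + 1) * pi / (2 * real (n * d)))
      = of_real (1 / (real d * (cfid (n * d) F)\<^sup>2 * (real n)\<^sup>2))" for l :: int
    using Verr_at_cos_eq_0[OF assms(2) d] by blast
  have "n * d \<ge> 2" using assms(1) nd by linarith
  show ?thesis
    using denom_deriv_nonzero_iff[OF assms(2) d assms(5)] Verr_eq[OF assms(2) d]
      trans[OF Verr_minimizers[OF \<open>n * d \<ge> 2\<close> assms(3-5)] minimizers] value_at_minimizers
      cfid_threshold[OF assms(1) nd]
    by blast
qed

end
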